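(* Let $K\ge 1$ and $d_0,d_1,\ldots,d_K\in\mathbb{N}$ with $d_0=n$. Let $\{(x^i,y^i): i\in[m]\}\subset\mathbb{R}^n\times\{0,1\}$ be a set of labeled training samples such that $\|x^i\|_2\le r$ for all $i\in[m]$, and let $\ell:\{0,1\}\times\mathbb{R}^{d_K}\to\mathbb{R}$ be a loss function. For $\lambda\in\mathbb{R}$ let $\sigma_\lambda:\mathbb{R}\to\{0,1\}$ be given by $\sigma_\lambda(\alpha)=0$ if $\alpha<\lambda$ and $\sigma_\lambda(\alpha)=1$ otherwise, applied componentwise to vectors. Consider the training problem $$\min \sum_{i=1}^m \ell(y^i,z^i)\quad\text{s.t.}\quad z^i=\sigma_{\lambda_K}\big(W^K\sigma_{\lambda_{K-1}}(W^{K-1}\cdots\sigma_{\lambda_1}(W^1x^i)\cdots)\big)\ \forall i\in[m],\quad W^k\in\mathbb{R}^{d_k\times d_{k-1}},\ \lambda_k\in\mathbb{R}\ \forall k\in[K].$$ Then this problem is equivalent to the mixed-integer nonlinear program $$\min \sum_{i=1}^m \ell(y^i,u^{i,K})$$ subject to $$W^1x^i< M_1u^{i,1}+\mathbf{1}\lambda_1,\qquad W^1x^i\ge M_1(u^{i,1}-\mathbf{1})+\mathbf{1}\lambda_1\qquad \forall i\in[m],$$ $$W^ku^{i,k-1}< M_ku^{i,k}+\mathbf{1}\lambda_k,\qquad W^ku^{i,k-1}\ge M_k(u^{i,k}-\mathbf{1})+\mathbf{1}\lambda_k\qquad \forall k\in[K]\setminus\{1\},\ i\in[m],$$ $$W^k\in[-1,1]^{d_k\times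 d_{k-1}},\ \lambda_k\in[-1,1]\quad\forall k\in[K],\qquad u^{i,k}\in\{0,1\}^{d_k}\quad\forall i\in[m],\ k\in[K],$$ where $M_1:=nr+1$, $M_k:=d_{k-1}+1$ for $k\ge2$, $\mathbf{1}$ denotes the all-ones vector, and the inequalities between vectors are componentwise (the variable $u^{i,K}$ plays the role of the network output $z^i$).
   Context: $[p]:=\{1,\ldots,p\}$ for $p\in\mathbb{N}$. The function $z\mapsto \sigma_{\lambda_K}(W^K\sigma_{\lambda_{K-1}}(\cdots\sigma_{\lambda_1}(W^1x)\cdots))$ is a neural network with binary threshold activation functions, weight matrices $W^k$ and learnable thresholds $\lambda_k$ (one scalar threshold per layer). *)

theory Defs
  imports Complex_Main
begin

definition sigma :: "real \<Rightarrow> real \<Rightarrow> real" where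
  "sigma lam a = (if a < lam then 0 else 1)"

text \<open>Vectors in R^p are represented as functions nat => real whose entries at
indices >= p are 0.  Weights: W k j l is entry (j,l) of W^k (layers k = 1..K),
lam k is the threshold of layer k, d k the width of layer k (d 0 = n).
net W lam d k x is the output of the first k layers on input x.\<close>
fun net :: "(nat \<Rightarrow> nat \<Rightarrow> nat \<Rightarrow> real) \<Rightarrow> (nat \<Rightarrow> real) \<Rightarrow> (nat \<Rightarrow> nat) \<Rightarrow> nat
             \<Rightarrow> (nat \<Rightarrow> real) \<Rightarrow> (nat \<Rightarrow> real)" where
  "net W lam d 0 x = x"
| "net W lam d (Suc k) x =
     (\<lambda>j. if j < d (Suc k)
          then sigma (lam (Suc k)) (\<Sum>l<d k. W (Suc k) j l * net W lam d k x l)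
          else 0)"

end

theory Submission
  imports Defs
begin

text \<open>Both directions rest on the big-M encoding of a threshold unit: for a binary u the
two inequalities force u = sigma lam s whatever M is, and conversely u = sigma lam s satisfies
them as soon as M exceeds the distance between s and lam.  Feasibility of the mixed-integer
program therefore forces u to be the network output.  For the converse, scaling the weights
and threshold of a layer by a positive factor does not change the network, so the parameters
may be taken in [-1/2, 1/2]; then every pre-activation is bounded by n r / 2 in the first layer
and by d (k - 1) / 2 in layer k, so its distance to the threshold stays below the chosen M.\<close>

definition big_M_threshold :: "real \<Rightarrow> real \<Rightarrow> real \<Rightarrow> real \<Rightarrow> bool" where
  "big_M_threshold M lam s u \<longleftrightarrow> s < M * u + lam \<and> s \<ge> M * (u - 1) + lam"

lemma big_M_threshold_imp_sigma:
  assumes "u \<in> {0, 1}" and "big_M_threshold M lam s u"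
  shows "u = sigma lam s"
  using assms by (auto simp: big_M_threshold_def sigma_def)

lemma big_M_threshold_sigma:
  assumes "\<bar>s - lam\<bar> < M"
  shows "big_M_threshold M lam s (sigma lam s)"
  using assms by (auto simp: big_M_threshold_def sigma_def)

lemma sigma_scale: "c > 0 \<Longrightarrow> sigma (c * lam) (c * a) = sigma lam a"
  by (simp add: sigma_def)

lemma net_apply:
  assumes "k \<ge> 1"
  shows "net W lam d k x j =
     (if j < d k then sigma (lam k) (\<Sum>l<d (k - 1). W k j l * net W lam d (k - 1) x l) else 0)"
  using assms by (cases k) auto

lemma net_binary: "k \<ge> 1 \<Longrightarrow> j < d k \<Longrightarrow> net W lam d k x j \<in> {0, 1}"
  by (auto simp: net_apply sigma_def)

lemma net_beyond_width: "k \<ge> 1 \<Longrightarrow> d k \<le> j \<Longrightarrow> net W lam d k x j = 0"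
  by (simp add: net_apply)

lemma net_scale:
  assumes "\<forall>k. c k > 0"
  shows "net (\<lambda>k j l. c k * W k j l) (\<lambda>k. c k * lam k) d k x = net W lam d k x"
proof (induction k)
  case (Suc k)
  have "(\<Sum>l<d k. c (Suc k) * W (Suc k) j l * net W lam d k x l)
      = c (Suc k) * (\<Sum>l<d k. W (Suc k) j l * net W lam d k x l)" for j
    by (simp add: sum_distrib_left mult.assoc)
  with Suc assms show ?case
    by (auto simp: sigma_scale)
qed simp

lemma net_normalize:
  obtains W' lam' where "\<And>k. net W' lam' d k = net W lam d k"
    and "\<And>k j l. j < d k \<Longrightarrow> l < d (k - 1) \<Longrightarrow> \<bar>W' k j l\<bar> \<le> 1/2"
    and "\<And>k. \<bar>lam' k\<bar> \<le> 1/2"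
proof -
  define A where "A k = 1 + \<bar>lam k\<bar> + (\<Sum>j<d k. \<Sum>l<d (k - 1). \<bar>W k j l\<bar>)" for k
  define c where "c k = 1 / (2 * A k)" for k
  have A_pos: "A k > 0" for k
    unfolding A_def by (simp add: add_pos_nonneg sum_nonneg)
  then have c_pos: "\<forall>k. c k > 0"
    by (simp add: c_def)
  have scaled_le: "c k * \<bar>a\<bar> \<le> 1/2" if "\<bar>a\<bar> \<le> A k" for k a
    using that A_pos[of k] by (simp add: c_def field_simps)
  show thesis
  proof
    show "net (\<lambda>k j l. c k * W k j l) (\<lambda>k. c k * lam k) d k = net W lam d k" for k
      using c_pos by (intro ext net_scale)
    show "\<bar>c k * lam k\<bar> \<le> 1/2" for k
      using c_pos scaled_le[of "lam k" k] by (simp add: A_def abs_mult abs_of_pos sum_nonneg)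
    show "\<bar>c k * W k j l\<bar> \<le> 1/2" if "j < d k" "l < d (k - 1)" for k j l
    proof -
      have "\<bar>W k j l\<bar> \<le> (\<Sum>l<d (k - 1). \<bar>W k j l\<bar>)"
        using that by (intro member_le_sum) auto
      also have "\<dots> \<le> (\<Sum>j<d k. \<Sum>l<d (k - 1). \<bar>W k j l\<bar>)"
        using that by (intro member_le_sum[where f = "\<lambda>j. \<Sum>l<d (k - 1). \<bar>W k j l\<bar>"])
          (auto intro: sum_nonneg)
      finally have "\<bar>W k j l\<bar> \<le> A k"
        by (simp add: A_def)
      with c_pos show ?thesis
        using scaled_le by (simp add: abs_mult abs_of_pos)
    qed
  qed
qed

lemma abs_sum_mult_le:
  fixes w v :: "nat \<Rightarrow> real"
  assumes "\<forall>l<p. \<bar>w l\<bar> \<le> a" and "\<forall>l<p. \<bar>v l\<bar> \<le> b"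
  shows "\<bar>\<Sum>l<p. w l * v l\<bar> \<le> real p * (a * b)"
proof -
  have "\<bar>\<Sum>l<p. w l * v l\<bar> \<le> (\<Sum>l<p. \<bar>w l\<bar> * \<bar>v l\<bar>)"
    using sum_abs[of "\<lambda>l. w l * v l" "{..<p}"] by (simp add: abs_mult)
  also have "\<dots> \<le> real p * (a * b)"
    using sum_bounded_above[of "{..<p}" "\<lambda>l. \<bar>w l\<bar> * \<bar>v l\<bar>" "a * b"] assms
    by (simp add: mult_mono')
  finally show ?thesis .
qed

lemma abs_le_sqrt_sum_squares:
  fixes x :: "nat \<Rightarrow> real"
  assumes "l < n"
  shows "\<bar>x l\<bar> \<le> sqrt (\<Sum>l<n. (x l)\<^sup>2)"
proof -
  have "(x l)\<^sup>2 \<le> (\<Sum>l<n. (x l)\<^sup>2)"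
    using assms by (intro member_le_sum) auto
  then show ?thesis
    by (metis real_sqrt_abs real_sqrt_le_mono)
qed

lemma net_big_M_threshold:
  assumes "1 \<le> k" and "j < d k"
    and "\<forall>l<d (k - 1). \<bar>W k j l\<bar> \<le> 1/2" and "\<bar>lam k\<bar> \<le> 1/2"
    and "0 \<le> B" and "\<forall>l<d (k - 1). \<bar>net W lam d (k - 1) x l\<bar> \<le> B"
  shows "big_M_threshold (real (d (k - 1)) * B + 1) (lam k)
           (\<Sum>l<d (k - 1). W k j l * net W lam d (k - 1) x l) (net W lam d k x j)"
proof -
  let ?s = "\<Sum>l<d (k - 1). W k j l * net W lam d (k - 1) x l"
  have "\<bar>?s\<bar> \<le> real (d (k - 1)) * (1/2 * B)"
    using assms(3,6) by (rule abs_sum_mult_le)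
  moreover have "0 \<le> real (d (k - 1)) * B"
    using assms(5) by simp
  ultimately have "\<bar>?s - lam k\<bar> < real (d (k - 1)) * B + 1"
    using assms(4) by linarith
  then show ?thesis
    using assms(1,2) by (simp add: net_apply big_M_threshold_sigma)
qed

lemma net_first_layer_big_M_threshold:
  assumes "j < d 1" and "\<forall>l<d 0. \<bar>W 1 j l\<bar> \<le> 1/2" and "\<bar>lam 1\<bar> \<le> 1/2"
    and "sqrt (\<Sum>l<d 0. (x l)\<^sup>2) \<le> r"
  shows "big_M_threshold (real (d 0) * r + 1) (lam 1) (\<Sum>l<d 0. W 1 j l * x l) (net W lam d 1 x j)"
proof -
  have "\<forall>l<d 0. \<bar>x l\<bar> \<le> r"
    using assms(4) abs_le_sqrt_sum_squares[of _ "d 0" x] by force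
  moreover have "0 \<le> r"
    using assms(4) by (meson order_trans real_sqrt_ge_zero sum_nonneg zero_le_power2)
  ultimately show ?thesis
    using net_big_M_threshold[of 1 j d W lam r x] assms(1-3) by simp
qed

lemma net_hidden_layer_big_M_threshold:
  assumes "2 \<le> k" and "j < d k"
    and "\<forall>l<d (k - 1). \<bar>W k j l\<bar> \<le> 1/2" and "\<bar>lam k\<bar> \<le> 1/2"
  shows "big_M_threshold (real (d (k - 1)) + 1) (lam k)
           (\<Sum>l<d (k - 1). W k j l * net W lam d (k - 1) x l) (net W lam d k x j)"
proof -
  have "\<forall>l<d (k - 1). \<bar>net W lam d (k - 1) x l\<bar> \<le> 1"
    using assms(1) net_binary[where k = "k - 1" and d = d and W = W and lam = lam and x = x]
    by fastforce
  then show ?thesis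
    using net_big_M_threshold[of k j d W lam 1 x] assms by simp
qed

lemma big_M_layers_eq_net:
  assumes binary: "\<forall>k\<in>{1..K}. \<forall>j. (j < d k \<longrightarrow> u k j \<in> {0, 1}) \<and> (j \<ge> d k \<longrightarrow> u k j = 0)"
    and first: "\<forall>j<d 1. \<exists>M. big_M_threshold M (lam 1) (\<Sum>l<d 0. W 1 j l * x l) (u 1 j)"
    and hidden: "\<forall>k\<in>{2..K}. \<forall>j<d k.
                   \<exists>M. big_M_threshold M (lam k) (\<Sum>l<d (k - 1). W k j l * u (k - 1) l) (u k j)"
  shows "k \<in> {1..K} \<Longrightarrow> u k = net W lam d k x"
proof (induction k)
  case (Suc k)
  have "u (Suc k) j = net W lam d (Suc k) x j" for j
  proof (cases "j < d (Suc k)")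
    case True
    have input: "(if k = 0 then x else u k) = net W lam d k x"
      using Suc by auto
    have "\<exists>M. big_M_threshold M (lam (Suc k))
            (\<Sum>l<d k. W (Suc k) j l * (if k = 0 then x else u k) l) (u (Suc k) j)"
    proof (cases "k = 0")
      case False
      with Suc.prems have "Suc k \<in> {2..K}"
        by auto
      with hidden True have "\<exists>M. big_M_threshold M (lam (Suc k))
          (\<Sum>l<d (Suc k - 1). W (Suc k) j l * u (Suc k - 1) l) (u (Suc k) j)"
        by blast
      with False show ?thesis
        by simp
    qed (use first True in auto)
    moreover have "u (Suc k) j \<in> {0, 1}"
      using binary Suc.prems True by auto
    ultimately show ?thesis
      using True by (auto simp: input big_M_threshold_imp_sigma)
  next
    case False
    with binary Suc.prems show ?thesis
      by auto
  qed
  then show ?case ..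
qed simp

theorem lemma1:
  fixes K n m :: nat and d :: "nat \<Rightarrow> nat" and r :: real
    and x :: "nat \<Rightarrow> nat \<Rightarrow> real" and y :: "nat \<Rightarrow> nat"
    and loss :: "nat \<Rightarrow> (nat \<Rightarrow> real) \<Rightarrow> real"
  assumes "K \<ge> 1"
    and "d 0 = n"
    and "\<forall>i<m. y i \<in> {0, 1}"
    and "\<forall>i<m. sqrt (\<Sum>l<n. (x i l)\<^sup>2) \<le> r"
  shows "{(\<Sum>i<m. loss (y i) (net W lam d K (x i))) | W lam. True}
       = {(\<Sum>i<m. loss (y i) (u i K)) | W lam u.
            (\<forall>k\<in>{1..K}. \<forall>j<d k. \<forall>l<d (k - 1). W k j l \<in> {-1..1})
          \<and> (\<forall>k\<in>{1..K}. lam k \<in> {-1..1})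
          \<and> (\<forall>i<m. \<forall>k\<in>{1..K}. \<forall>j. (j < d k \<longrightarrow> u i k j \<in> {0, 1}) \<and> (j \<ge> d k \<longrightarrow> u i k j = 0))
          \<and> (\<forall>i<m. \<forall>j<d 1.
                (\<Sum>l<n. W 1 j l * x i l) < (real n * r + 1) * u i 1 j + lam 1
              \<and> (\<Sum>l<n. W 1 j l * x i l) \<ge> (real n * r + 1) * (u i 1 j - 1) + lam 1)
          \<and> (\<forall>k\<in>{2..K}. \<forall>i<m. \<forall>j<d k.
                (\<Sum>l<d (k - 1). W k j l * u i (k - 1) l) < (real (d (k - 1)) + 1) * u i k j + lam k
              \<and> (\<Sum>l<d (k - 1). W k j l * u i (k - 1) l) \<ge> (real (d (k - 1)) + 1) * (u i k j - 1) + lam k)}"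
proof (intro set_eqI iffI, goal_cases)
  case (1 v)
  then obtain W0 lam0 where v: "v = (\<Sum>i<m. loss (y i) (net W0 lam0 d K (x i)))"
    by blast
  obtain W lam where same_net: "\<And>k. net W lam d k = net W0 lam0 d k"
    and W: "\<And>k j l. j < d k \<Longrightarrow> l < d (k - 1) \<Longrightarrow> \<bar>W k j l\<bar> \<le> 1/2"
    and lam: "\<And>k. \<bar>lam k\<bar> \<le> 1/2"
    using net_normalize[where W = W0 and lam = lam0 and d = d] by blast
  define u where "u i k = net W lam d k (x i)" for i k
  have first: "big_M_threshold (real n * r + 1) (lam 1) (\<Sum>l<n. W 1 j l * x i l) (u i 1 j)"
    if "i < m" and "j < d 1" for i j
    using net_first_layer_big_M_threshold[of j d W lam "x i" r] that W lam assms(2,4)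
    by (simp add: u_def)
  have hidden: "big_M_threshold (real (d (k - 1)) + 1) (lam k)
      (\<Sum>l<d (k - 1). W k j l * u i (k - 1) l) (u i k j)"
    if "k \<in> {2..K}" and "j < d k" for i k j
    using net_hidden_layer_big_M_threshold[of k j d W lam "x i"] that W lam by (simp add: u_def)
  have "v = (\<Sum>i<m. loss (y i) (u i K))"
    by (simp add: v u_def same_net)
  moreover have "W k j l \<in> {-1..1}" if "j < d k" and "l < d (k - 1)" for k j l
    using W[OF that] by (auto simp: abs_le_iff)
  moreover have "lam k \<in> {-1..1}" for k
    using lam[of k] by (auto simp: abs_le_iff)
  moreover have "(j < d k \<longrightarrow> u i k j \<in> {0, 1}) \<and> (j \<ge> d k \<longrightarrow> u i k j = 0)" if "1 \<le> k" for i k j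
    using that net_binary[where x = "x i"] net_beyond_width[where x = "x i"] by (auto simp: u_def)
  ultimately show ?case
    using first hidden unfolding big_M_threshold_def
    by (intro CollectI exI[of _ W] exI[of _ lam] exI[of _ u]) auto
next
  case (2 v)
  then obtain W lam u where v: "v = (\<Sum>i<m. loss (y i) (u i K))"
    and binary: "\<forall>i<m. \<forall>k\<in>{1..K}. \<forall>j. (j < d k \<longrightarrow> u i k j \<in> {0, 1}) \<and> (j \<ge> d k \<longrightarrow> u i k j = 0)"
    and first: "\<forall>i<m. \<forall>j<d 1. big_M_threshold (real n * r + 1) (lam 1) (\<Sum>l<d 0. W 1 j l * x i l) (u i 1 j)"
    and hidden: "\<forall>i<m. \<forall>k\<in>{2..K}. \<forall>j<d k. big_M_threshold (real (d (k - 1)) + 1) (lam k)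
                  (\<Sum>l<d (k - 1). W k j l * u i (k - 1) l) (u i k j)"
    by (auto simp: big_M_threshold_def assms(2))
  have "K \<in> {1..K}"
    using assms(1) by simp
  then have "u i K = net W lam d K (x i)" if "i < m" for i
    by (intro big_M_layers_eq_net) (use that binary first hidden in blast)+
  then show ?case
    unfolding v by auto
qed

end
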